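(* Let $\mathcal{O}\subset\mathbb{R}^{2}$ be an oval with support parametrization $\gamma$ and centrix $\mathbf{c}:S^{1}\to\mathbb{R}^{2}$. Then $\mathbf{c}$ coincides with the even part $\frac12(\gamma(\theta)+\gamma(\theta+\pi))$ of $\gamma$. Moreover $\mathbf{c}$ is constant if and only if $\mathcal{O}$ is central, and in that case, writing $\mathbf{c}$ for this constant, the odd part $\frac12(\gamma(\theta)-\gamma(\theta+\pi))$ of $\gamma$ support-parametrizes the origin-centered oval $\mathcal{O}-\mathbf{c}$.
   Context: Identify $\mathbb{R}^{2}\cong\mathbb{C}$. An oval is a $C^{2}$ embedded closed plane curve with nowhere-vanishing curvature; it is central if invariant under reflection through some point. A map $\gamma:S^{1}\to\mathbb{R}^{2}$ (viewed as $2\pi$-periodic on $\mathbb{R}$) support-parametrizes $\mathcal{O}$ if it parametrizes $\mathcal{O}$ and $\gamma'(\theta)=|\gamma'(\theta)|\,ie^{i\theta}$ for all $\theta$ (it is the inverse of the outer unit normal map). For $\theta$, the $\theta$-diameter of $\mathcal{O}$ is the segment joining the two points of $\mathcal{O}$ whose tangent lines are perpendicular to $e^{i\theta}$; $\mathbf{c}(\theta)$ is its midpoint, and the map $\mathbf{c}$ is the centrix. *)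

theory Defs
  imports "HOL-Analysis.Analysis"
begin

text \<open>We identify the plane with the complex numbers. A curve is a 2pi-periodic map
  real => complex; the circle S^1 is identified with R/(2 pi Z).\<close>

text \<open>A regular C^2 simple closed 2pi-periodic parametrization of Ov with nowhere-vanishing
  curvature (curvature sign given by Im(conj(p') * p'')).\<close>
definition oval_param :: "complex set \<Rightarrow> (real \<Rightarrow> complex) \<Rightarrow> bool" where
  "oval_param Ov p \<longleftrightarrow>
     (\<exists>p' p''. (\<forall>t. (p has_vector_derivative p' t) (at t)) \<and>
               (\<forall>t. (p' has_vector_derivative p'' t) (at t)) \<and>
               continuous_on UNIV p'' \<and>
               (\<forall>t. p' t \<noteq> 0) \<and>
               (\<forall>t. Im (cnj (p' t) * p'' t) \<noteq> 0)) \<and>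
     (\<forall>t. p (t + 2 * pi) = p t) \<and>
     inj_on p {0..<2 * pi} \<and>
     Ov = p ` UNIV"

definition oval :: "complex set \<Rightarrow> bool" where
  "oval Ov \<longleftrightarrow> (\<exists>p. oval_param Ov p)"

definition central :: "complex set \<Rightarrow> bool" where
  "central Ov \<longleftrightarrow> (\<exists>c. (\<lambda>z. 2 * c - z) ` Ov = Ov)"

definition support_param :: "complex set \<Rightarrow> (real \<Rightarrow> complex) \<Rightarrow> bool" where
  "support_param Ov \<gamma> \<longleftrightarrow>
     (\<forall>\<theta>. \<gamma> (\<theta> + 2 * pi) = \<gamma> \<theta>) \<and>
     inj_on \<gamma> {0..<2 * pi} \<and>
     \<gamma> ` UNIV = Ov \<and>
     (\<forall>\<theta>. \<exists>v. (\<gamma> has_vector_derivative v) (at \<theta>) \<and>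
              v = complex_of_real (cmod v) * (\<i> * cis \<theta>))"

definition tangent_perp_points :: "complex set \<Rightarrow> real \<Rightarrow> complex set" where
  "tangent_perp_points Ov \<theta> =
     {z \<in> Ov. \<exists>p t. oval_param Ov p \<and> z = p t \<and>
                 Re (vector_derivative p (at t) * cnj (cis \<theta>)) = 0}"

definition centrix :: "complex set \<Rightarrow> real \<Rightarrow> complex" where
  "centrix Ov \<theta> = (SOME m. \<exists>a b. a \<noteq> b \<and> tangent_perp_points Ov \<theta> = {a, b} \<and> m = (a + b) / 2)"

end

theory Submission
  imports Defs
begin

text \<open>Since \<gamma>'(\<theta>) is a nonnegative multiple of i e^(i\<theta>), every chord from \<gamma>(\<phi>) to \<gamma>(\<psi>)
  with |\<psi> - \<phi>| \<le> \<delta> makes an angle at most \<delta> with i e^(i\<phi>). Near \<gamma>(\<phi>) the oval consists of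
  such points, so any differentiable curve in the oval through \<gamma>(\<phi>) has its velocity along
  i e^(i\<phi>). Hence the points whose tangent is perpendicular to e^(i\<theta>) are exactly \<gamma>(\<theta>) and
  \<gamma>(\<theta> + \<pi>), and the centrix is the even part of \<gamma>. A constant centrix c means
  \<gamma>(\<theta> + \<pi>) = 2c - \<gamma>(\<theta>), i.e. symmetry about c, and then the odd part is \<gamma> - c. Conversely,
  if the oval is symmetric about c, then \<theta> \<mapsto> 2c - \<gamma>(\<theta> + \<pi>) is another support
  parametrization, whose even part is 2c minus that of \<gamma>; both compute the centrix, so it is c.\<close>

lemma periodic_int_shift:
  fixes f :: "real \<Rightarrow> 'a"
  assumes per: "\<forall>x. f (x + T) = f x"
  shows "f (x + of_int k * T) = f x"
proof (induction k rule: int_induct[where k = 0])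
  case base
  show ?case by simp
next
  case (step1 i)
  have "f (x + of_int (i + 1) * T) = f ((x + of_int i * T) + T)"
    by (simp add: algebra_simps)
  with per step1.IH show ?case by simp
next
  case (step2 i)
  have "f (x + of_int i * T) = f ((x + of_int (i - 1) * T) + T)"
    by (simp add: algebra_simps)
  with per step2.IH show ?case by simp
qed

lemma shift_into_period_interval:
  fixes T :: real
  assumes "T > 0"
  obtains k :: int where "x + of_int k * T \<in> {a..<a + T}"
proof
  have "x + of_int (- \<lfloor>(x - a) / T\<rfloor>) * T = a + T * frac ((x - a) / T)"
    using assms by (simp add: frac_def field_simps)
  moreover have "0 \<le> frac ((x - a) / T)" "frac ((x - a) / T) < 1"
    by (simp_all add: frac_lt_1)
  ultimately show "x + of_int (- \<lfloor>(x - a) / T\<rfloor>) * T \<in> {a..<a + T}"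
    using assms by (simp add: mult_less_cancel_left_pos)
qed

lemma periodic_range_eq:
  fixes f :: "real \<Rightarrow> 'a"
  assumes per: "\<forall>x. f (x + T) = f x" and "T > 0"
  shows "range f = f ` {a..<a + T}"
proof (intro equalityI subsetI)
  fix z assume "z \<in> range f"
  then obtain x where z: "z = f x" by blast
  obtain k :: int where "x + of_int k * T \<in> {a..<a + T}"
    using shift_into_period_interval[OF \<open>T > 0\<close>] .
  then show "z \<in> f ` {a..<a + T}"
    unfolding z by (metis image_eqI periodic_int_shift[OF per])
qed blast

lemma periodic_inj_on_shift:
  fixes f :: "real \<Rightarrow> 'a"
  assumes per: "\<forall>x. f (x + T) = f x" and "T > 0" and inj: "inj_on f {0..<T}"
  shows "inj_on f {a..<a + T}"
proof (rule inj_onI)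
  fix x y assume x: "x \<in> {a..<a + T}" and y: "y \<in> {a..<a + T}" and "f x = f y"
  obtain k :: int where k: "x + of_int k * T \<in> {0..<T}"
    using shift_into_period_interval[OF \<open>T > 0\<close>] by (metis add_0)
  obtain l :: int where l: "y + of_int l * T \<in> {0..<T}"
    using shift_into_period_interval[OF \<open>T > 0\<close>] by (metis add_0)
  have "f (x + of_int k * T) = f (y + of_int l * T)"
    using \<open>f x = f y\<close> by (simp add: periodic_int_shift[OF per])
  then have "x + of_int k * T = y + of_int l * T"
    using inj_onD[OF inj _ k l] by blast
  then have "of_int (l - k) * T = x - y" by (simp add: algebra_simps)
  moreover have "\<bar>x - y\<bar> < 1 * T" using x y by auto
  ultimately have "\<bar>of_int (l - k)\<bar> * T < 1 * T"
    using \<open>T > 0\<close> by (metis abs_mult abs_of_pos)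
  then have "\<bar>of_int (l - k)\<bar> < (1::real)"
    using \<open>T > 0\<close> by (simp only: mult_less_cancel_right_pos)
  then have "l = k" by linarith
  with \<open>of_int (l - k) * T = x - y\<close> show "x = y" by simp
qed

lemma support_paramD:
  assumes "support_param Ov \<gamma>"
  shows "\<forall>\<theta>. \<gamma> (\<theta> + 2 * pi) = \<gamma> \<theta>" and "inj_on \<gamma> {a..<a + 2 * pi}" and "range \<gamma> = Ov"
    and "Ov = \<gamma> ` {a..<a + 2 * pi}"
  using assms periodic_inj_on_shift[of \<gamma> "2 * pi"] periodic_range_eq[of \<gamma> "2 * pi"]
  unfolding support_param_def by auto

lemma support_param_derivative:
  assumes "support_param Ov \<gamma>"
  obtains d where "\<And>\<theta>. d \<theta> \<ge> 0"
    and "\<And>\<theta>. (\<gamma> has_vector_derivative complex_of_real (d \<theta>) * (\<i> * cis \<theta>)) (at \<theta>)"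
proof -
  from assms obtain v where
    "\<And>\<theta>. (\<gamma> has_vector_derivative v \<theta>) (at \<theta>)"
    "\<And>\<theta>. v \<theta> = complex_of_real (cmod (v \<theta>)) * (\<i> * cis \<theta>)"
    unfolding support_param_def by metis
  then show thesis by (intro that[of "\<lambda>\<theta>. cmod (v \<theta>)"]) auto
qed

lemma support_param_continuous:
  assumes "support_param Ov \<gamma>"
  shows "continuous_on UNIV \<gamma>"
proof -
  obtain d where "\<And>\<theta>. (\<gamma> has_vector_derivative complex_of_real (d \<theta>) * (\<i> * cis \<theta>)) (at \<theta>)"
    using support_param_derivative[OF assms] by blast
  then show ?thesis
    by (meson continuous_at_imp_continuous_on has_vector_derivative_continuous)
qed

lemma abs_sin_le_tan_mul_cos:
  fixes x \<delta> :: real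
  assumes "\<bar>x\<bar> \<le> \<delta>" "\<delta> < pi / 2"
  shows "\<bar>sin x\<bar> \<le> tan \<delta> * cos x"
proof -
  have "cos x > 0" using assms by (intro cos_gt_zero_pi) auto
  have "tan x \<le> tan \<delta>" "tan (- x) \<le> tan \<delta>"
    using assms by (intro tan_mono_le; simp)+
  then have "\<bar>tan x\<bar> \<le> tan \<delta>" by simp
  then have "\<bar>tan x\<bar> * cos x \<le> tan \<delta> * cos x"
    using \<open>cos x > 0\<close> by (simp add: mult_right_mono)
  then show ?thesis
    using \<open>cos x > 0\<close> by (simp add: tan_def abs_divide)
qed

lemma abs_diff_le_of_deriv_dominated:
  fixes g k :: "real \<Rightarrow> real"
  assumes "a \<le> b"
    and g: "\<And>u. u \<in> {a..b} \<Longrightarrow> (g has_real_derivative g' u) (at u)"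
    and k: "\<And>u. u \<in> {a..b} \<Longrightarrow> (k has_real_derivative k' u) (at u)"
    and dom: "\<And>u. u \<in> {a..b} \<Longrightarrow> \<bar>g' u\<bar> \<le> k' u"
  shows "\<bar>g b - g a\<bar> \<le> k b - k a"
proof -
  have "(\<lambda>u. k u - g u) a \<le> (\<lambda>u. k u - g u) b"
    by (rule DERIV_nonneg_imp_nondecreasing[OF \<open>a \<le> b\<close>])
      (use g k dom in \<open>fastforce intro!: derivative_eq_intros\<close>)
  moreover have "(\<lambda>u. k u + g u) a \<le> (\<lambda>u. k u + g u) b"
    by (rule DERIV_nonneg_imp_nondecreasing[OF \<open>a \<le> b\<close>])
      (use g k dom in \<open>fastforce intro!: derivative_eq_intros\<close>)
  ultimately show ?thesis by simp
qed

lemma support_param_chord_angle: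
  assumes sp: "support_param Ov \<gamma>" and "\<delta> < pi / 2" and near: "\<bar>\<psi> - \<phi>\<bar> \<le> \<delta>"
  shows "\<bar>Re ((\<gamma> \<psi> - \<gamma> \<phi>) * cnj (cis \<phi>))\<bar> \<le> tan \<delta> * cmod (\<gamma> \<psi> - \<gamma> \<phi>)"
proof -
  obtain d where d_nonneg: "\<And>u. d u \<ge> 0"
    and d: "\<And>u. (\<gamma> has_vector_derivative complex_of_real (d u) * (\<i> * cis u)) (at u)"
    using support_param_derivative[OF sp] by blast
  define g where "g u = Re ((\<gamma> u - \<gamma> \<phi>) * cnj (cis \<phi>))" for u
  define k where "k u = tan \<delta> * Im ((\<gamma> u - \<gamma> \<phi>) * cnj (cis \<phi>))" for u
  have rotated: "((\<lambda>u. (\<gamma> u - \<gamma> \<phi>) * cnj (cis \<phi>)) has_vector_derivative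
      complex_of_real (d u) * (\<i> * cis (u - \<phi>))) (at u)" for u
  proof -
    have "((\<lambda>u. (\<gamma> u - \<gamma> \<phi>) * cnj (cis \<phi>)) has_vector_derivative
        (complex_of_real (d u) * (\<i> * cis u) - 0) * cnj (cis \<phi>)) (at u)"
      by (intro has_vector_derivative_mult_left has_vector_derivative_diff d
          has_vector_derivative_const)
    moreover have "(complex_of_real (d u) * (\<i> * cis u) - 0) * cnj (cis \<phi>)
        = complex_of_real (d u) * (\<i> * cis (u - \<phi>))"
      using cis_mult[of u "- \<phi>"] by (simp add: cis_cnj algebra_simps)
    ultimately show ?thesis by (simp only:)
  qed
  have g': "(g has_real_derivative - d u * sin (u - \<phi>)) (at u)" for u
    using has_field_derivative_Re[OF rotated] unfolding g_def by simp
  have k': "(k has_real_derivative tan \<delta> * (d u * cos (u - \<phi>))) (at u)" for u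
    using DERIV_cmult[OF has_field_derivative_Im[OF rotated]] unfolding k_def by simp
  have dom: "\<bar>- d u * sin (u - \<phi>)\<bar> \<le> tan \<delta> * (d u * cos (u - \<phi>))"
    if "\<bar>u - \<phi>\<bar> \<le> \<delta>" for u
    using mult_left_mono[OF abs_sin_le_tan_mul_cos[OF that \<open>\<delta> < pi / 2\<close>] d_nonneg[of u]] d_nonneg[of u]
    by (simp add: abs_mult algebra_simps)
  have "\<bar>g \<psi>\<bar> \<le> \<bar>k \<psi>\<bar>"
  proof (cases "\<phi> \<le> \<psi>")
    case True
    have "\<bar>g \<psi> - g \<phi>\<bar> \<le> k \<psi> - k \<phi>"
      by (rule abs_diff_le_of_deriv_dominated[OF True g' k' dom]) (use near in auto)
    then show ?thesis by (simp add: g_def k_def)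
  next
    case False
    have "\<bar>g \<phi> - g \<psi>\<bar> \<le> k \<phi> - k \<psi>"
      by (rule abs_diff_le_of_deriv_dominated[OF _ g' k' dom]) (use False near in auto)
    then show ?thesis by (simp add: g_def k_def)
  qed
  also have "\<bar>k \<psi>\<bar> \<le> tan \<delta> * cmod (\<gamma> \<psi> - \<gamma> \<phi>)"
  proof -
    have "0 \<le> \<delta>" using near by linarith
    then have "0 \<le> tan \<delta>"
      using \<open>\<delta> < pi / 2\<close> tan_gt_zero[of \<delta>] by (cases "\<delta> = 0") auto
    moreover have "\<bar>Im ((\<gamma> \<psi> - \<gamma> \<phi>) * cnj (cis \<phi>))\<bar> \<le> cmod (\<gamma> \<psi> - \<gamma> \<phi>)"
      using abs_Im_le_cmod[of "(\<gamma> \<psi> - \<gamma> \<phi>) * cnj (cis \<phi>)"] by (simp add: norm_mult)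
    ultimately show ?thesis unfolding k_def by (simp add: abs_mult mult_left_mono)
  qed
  finally show ?thesis unfolding g_def .
qed

lemma support_param_local_preimage:
  assumes sp: "support_param Ov \<gamma>" and "0 < \<delta>" "\<delta> < pi"
    and cont: "isCont p t" and img: "range p \<subseteq> Ov" and pt: "p t = \<gamma> \<phi>"
  shows "\<forall>\<^sub>F s in at t. \<exists>u. \<bar>u - \<phi>\<bar> \<le> \<delta> \<and> p s = \<gamma> u"
proof -
  define K where "K = \<gamma> ` {\<phi> + \<delta>..\<phi> + 2 * pi - \<delta>}"
  have "closed K"
    unfolding K_def using support_param_continuous[OF sp]
    by (intro compact_imp_closed compact_continuous_image) (auto intro: continuous_on_subset)
  have "\<gamma> \<phi> \<notin> K"
  proof
    assume "\<gamma> \<phi> \<in> K"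
    then obtain u where u: "u \<in> {\<phi> + \<delta>..\<phi> + 2 * pi - \<delta>}" "\<gamma> \<phi> = \<gamma> u"
      unfolding K_def by auto
    then have "\<phi> = u"
      using inj_onD[OF support_paramD(2)[OF sp, of \<phi>]] \<open>0 < \<delta>\<close> by auto
    with u \<open>0 < \<delta>\<close> show False by auto
  qed
  then have "\<forall>\<^sub>F s in at t. p s \<in> - K"
    using topological_tendstoD[OF cont[unfolded isCont_def] open_Compl[OF \<open>closed K\<close>]] pt
    by simp
  then show ?thesis
  proof (rule eventually_mono)
    fix s assume "p s \<in> - K"
    obtain u where u: "u \<in> {\<phi> - \<delta>..<\<phi> - \<delta> + 2 * pi}" "p s = \<gamma> u"
      using img support_paramD(4)[OF sp, of "\<phi> - \<delta>"] by blast
    have "u < \<phi> + \<delta>"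
    proof (rule ccontr)
      assume "\<not> u < \<phi> + \<delta>"
      with u have "p s \<in> K" unfolding K_def by auto
      with \<open>p s \<in> - K\<close> show False by simp
    qed
    with u show "\<exists>u. \<bar>u - \<phi>\<bar> \<le> \<delta> \<and> p s = \<gamma> u" by (intro exI[of _ u]) auto
  qed
qed

lemma curve_in_support_param_tangent_bound:
  assumes sp: "support_param Ov \<gamma>" and "0 < \<delta>" "\<delta> < pi / 2"
    and p': "(p has_vector_derivative w) (at t)" and img: "range p \<subseteq> Ov" and pt: "p t = \<gamma> \<phi>"
  shows "\<bar>Re (w * cnj (cis \<phi>))\<bar> \<le> tan \<delta> * cmod w"
proof -
  define c where "c = cnj (cis \<phi>)"
  define Z where "Z s = (p s - p t) * c / complex_of_real (s - t)" for s
  have pc: "((\<lambda>s. p s * c) has_vector_derivative w * c) (at t)"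
    using has_vector_derivative_mult_left[OF p'] .
  have Re_Z: "((\<lambda>s. Re (Z s)) \<longlongrightarrow> Re (w * c)) (at t)"
    using has_field_derivative_Re[OF pc] unfolding has_field_derivative_iff Z_def
    by (simp add: algebra_simps)
  have "((\<lambda>s. Im (Z s)) \<longlongrightarrow> Im (w * c)) (at t)"
    using has_field_derivative_Im[OF pc] unfolding has_field_derivative_iff Z_def
    by (simp add: algebra_simps)
  with Re_Z have Z: "(Z \<longlongrightarrow> w * c) (at t)" by (simp add: tendsto_complex_iff)
  have "\<forall>\<^sub>F s in at t. \<exists>u. \<bar>u - \<phi>\<bar> \<le> \<delta> \<and> p s = \<gamma> u"
    using support_param_local_preimage[OF sp _ _ has_vector_derivative_continuous[OF p'] img pt]
      \<open>0 < \<delta>\<close> \<open>\<delta> < pi / 2\<close> by simp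
  then have cone: "\<forall>\<^sub>F s in at t. \<bar>Re (Z s)\<bar> \<le> tan \<delta> * cmod (Z s)"
  proof (rule eventually_mono)
    fix s assume "\<exists>u. \<bar>u - \<phi>\<bar> \<le> \<delta> \<and> p s = \<gamma> u"
    then obtain u where u: "\<bar>u - \<phi>\<bar> \<le> \<delta>" "p s = \<gamma> u" by blast
    have "\<bar>Re ((p s - p t) * c)\<bar> \<le> tan \<delta> * cmod ((p s - p t) * c)"
      using support_param_chord_angle[OF sp \<open>\<delta> < pi / 2\<close> u(1)] u(2) pt
      unfolding c_def by (simp add: norm_mult)
    then have "\<bar>Re ((p s - p t) * c)\<bar> / \<bar>s - t\<bar> \<le> tan \<delta> * cmod ((p s - p t) * c) / \<bar>s - t\<bar>"
      by (simp add: divide_right_mono)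
    then show "\<bar>Re (Z s)\<bar> \<le> tan \<delta> * cmod (Z s)"
      unfolding Z_def by (simp add: abs_divide norm_divide flip: of_real_diff)
  qed
  have "\<bar>Re (w * c)\<bar> \<le> tan \<delta> * cmod (w * c)"
    by (rule tendsto_le[OF _ tendsto_mult[OF tendsto_const tendsto_norm[OF Z]]
          tendsto_rabs[OF Re_Z] cone]) simp
  then show ?thesis unfolding c_def by (simp add: norm_mult)
qed

lemma curve_in_support_param_tangent:
  assumes sp: "support_param Ov \<gamma>"
    and p': "(p has_vector_derivative w) (at t)" and img: "range p \<subseteq> Ov" and pt: "p t = \<gamma> \<phi>"
  shows "Re (w * cnj (cis \<phi>)) = 0"
proof -
  have "\<forall>\<^sub>F \<delta> in at_right 0. \<bar>Re (w * cnj (cis \<phi>))\<bar> \<le> tan \<delta> * cmod w"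
  proof (rule eventually_mono[OF eventually_at_right_real])
    show "\<bar>Re (w * cnj (cis \<phi>))\<bar> \<le> tan \<delta> * cmod w" if "\<delta> \<in> {0<..<pi / 2}" for \<delta>
      using that curve_in_support_param_tangent_bound[OF sp _ _ p' img pt] by simp
  qed simp
  moreover have "((\<lambda>\<delta>. tan \<delta> * cmod w) \<longlongrightarrow> tan 0 * cmod w) (at_right 0)"
    by (intro tendsto_intros) auto
  ultimately have "\<bar>Re (w * cnj (cis \<phi>))\<bar> \<le> tan 0 * cmod w"
    by (intro tendsto_le[OF trivial_limit_at_right_real _ tendsto_const])
  then show ?thesis by simp
qed

lemma orthogonal_cis_imp_sin_diff_eq_0:
  fixes w :: complex
  assumes "w \<noteq> 0" "Re (w * cnj (cis \<theta>)) = 0" "Re (w * cnj (cis \<phi>)) = 0"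
  shows "sin (\<phi> - \<theta>) = 0"
  using assms unfolding sin_diff by (simp add: complex_eq_iff) algebra

lemma periodic_sin_diff_eq_0:
  assumes per: "\<forall>\<theta>. \<gamma> (\<theta> + 2 * pi) = \<gamma> \<theta>" and "sin (\<phi> - \<theta>) = 0"
  shows "\<gamma> \<phi> \<in> {\<gamma> \<theta>, \<gamma> (\<theta> + pi)}"
proof -
  obtain n :: int where n: "\<phi> - \<theta> = of_int n * pi"
    using \<open>sin (\<phi> - \<theta>) = 0\<close> sin_zero_iff_int2 by blast
  show ?thesis
  proof (cases "even n")
    case True
    then obtain m where "n = 2 * m" by blast
    with n have "\<phi> = \<theta> + of_int m * (2 * pi)" by (simp add: algebra_simps)
    then show ?thesis using periodic_int_shift[OF per] by simp
  next
    case False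
    then obtain m where "n = 2 * m + 1" using oddE by blast
    with n have "\<phi> = (\<theta> + pi) + of_int m * (2 * pi)" by (simp add: algebra_simps)
    then show ?thesis using periodic_int_shift[OF per] by simp
  qed
qed

lemma tangent_perp_points_support_param:
  assumes "oval Ov" and sp: "support_param Ov \<gamma>"
  shows "tangent_perp_points Ov \<theta> = {\<gamma> \<theta>, \<gamma> (\<theta> + pi)}"
proof (intro equalityI subsetI)
  fix z assume "z \<in> tangent_perp_points Ov \<theta>"
  then obtain p t where z: "z \<in> Ov" "oval_param Ov p" "z = p t"
    and perp: "Re (vector_derivative p (at t) * cnj (cis \<theta>)) = 0"
    unfolding tangent_perp_points_def by blast
  from z(2) obtain p' where p': "\<And>t. (p has_vector_derivative p' t) (at t)"
    and "\<And>t. p' t \<noteq> 0" and "Ov = range p"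
    unfolding oval_param_def by blast
  obtain \<phi> where \<phi>: "z = \<gamma> \<phi>" using z(1) support_paramD(3)[OF sp] by auto
  have "Re (p' t * cnj (cis \<phi>)) = 0"
    by (rule curve_in_support_param_tangent[OF sp p']) (use \<open>Ov = range p\<close> z \<phi> in auto)
  moreover have "Re (p' t * cnj (cis \<theta>)) = 0"
    using perp vector_derivative_at[OF p'] by simp
  ultimately have "sin (\<phi> - \<theta>) = 0"
    using orthogonal_cis_imp_sin_diff_eq_0 \<open>p' t \<noteq> 0\<close> by blast
  then show "z \<in> {\<gamma> \<theta>, \<gamma> (\<theta> + pi)}"
    using periodic_sin_diff_eq_0[OF support_paramD(1)[OF sp]] \<phi> by blast
next
  obtain p where p: "oval_param Ov p" using \<open>oval Ov\<close> unfolding oval_def by blast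
  then obtain p' where p': "\<And>t. (p has_vector_derivative p' t) (at t)" and "Ov = range p"
    unfolding oval_param_def by blast
  have "\<gamma> x \<in> tangent_perp_points Ov \<theta>" if x: "x = \<theta> \<or> x = \<theta> + pi" for x
  proof -
    obtain t where t: "\<gamma> x = p t"
      using support_paramD(3)[OF sp] \<open>Ov = range p\<close> by (metis rangeE rangeI)
    have "Re (p' t * cnj (cis x)) = 0"
      by (rule curve_in_support_param_tangent[OF sp p']) (use \<open>Ov = range p\<close> t in auto)
    then have "Re (vector_derivative p (at t) * cnj (cis \<theta>)) = 0"
      using vector_derivative_at[OF p'] x by (auto simp flip: minus_cis)
    then show ?thesis
      using p t support_paramD(3)[OF sp] unfolding tangent_perp_points_def by blast
  qed
  then show "z \<in> tangent_perp_points Ov \<theta>" if "z \<in> {\<gamma> \<theta>, \<gamma> (\<theta> + pi)}" for z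
    using that by blast
qed

lemma support_param_antipodal_neq:
  assumes "support_param Ov \<gamma>"
  shows "\<gamma> \<theta> \<noteq> \<gamma> (\<theta> + pi)"
proof
  assume "\<gamma> \<theta> = \<gamma> (\<theta> + pi)"
  moreover have "\<theta> \<in> {\<theta>..<\<theta> + 2 * pi}" "\<theta> + pi \<in> {\<theta>..<\<theta> + 2 * pi}" by simp_all
  ultimately have "\<theta> = \<theta> + pi" by (rule inj_onD[OF support_paramD(2)[OF assms]])
  then show False by simp
qed

lemma some_midpoint_doubleton:
  fixes x y :: "'a :: field_char_0"
  assumes "x \<noteq> y"
  shows "(SOME m. \<exists>a b. a \<noteq> b \<and> {x, y} = {a, b} \<and> m = (a + b) / 2) = (x + y) / 2"
proof (rule some_equality)
  show "\<exists>a b. a \<noteq> b \<and> {x, y} = {a, b} \<and> (x + y) / 2 = (a + b) / 2"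
    using assms by blast
qed (metis add.commute doubleton_eq_iff)

lemma centrix_support_param:
  assumes "oval Ov" and "support_param Ov \<gamma>"
  shows "centrix Ov \<theta> = (\<gamma> \<theta> + \<gamma> (\<theta> + pi)) / 2"
  unfolding centrix_def tangent_perp_points_support_param[OF assms]
  by (rule some_midpoint_doubleton[OF support_param_antipodal_neq[OF assms(2)]])

lemma range_shift_eq:
  fixes f :: "real \<Rightarrow> 'a"
  shows "range (\<lambda>x. f (x + a)) = range f"
proof (intro equalityI subsetI)
  fix y assume "y \<in> range f"
  then obtain x where "y = f x" by blast
  then show "y \<in> range (\<lambda>x. f (x + a))" using rangeI[of "\<lambda>x. f (x + a)" "x - a"] by simp
qed auto

lemma support_param_translate:
  assumes sp: "support_param Ov \<gamma>"
  shows "support_param ((\<lambda>z. z - c) ` Ov) (\<lambda>\<theta>. \<gamma> \<theta> - c)"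
  unfolding support_param_def
proof (intro conjI allI)
  show "\<gamma> (\<theta> + 2 * pi) - c = \<gamma> \<theta> - c" for \<theta>
    using support_paramD(1)[OF sp] by simp
  show "inj_on (\<lambda>\<theta>. \<gamma> \<theta> - c) {0..<2 * pi}"
    using support_paramD(2)[OF sp, of 0] by (simp add: inj_on_def)
  show "range (\<lambda>\<theta>. \<gamma> \<theta> - c) = (\<lambda>z. z - c) ` Ov"
    by (simp add: image_image flip: support_paramD(3)[OF sp])
  fix \<theta>
  obtain v where v: "(\<gamma> has_vector_derivative v) (at \<theta>)"
    "v = complex_of_real (cmod v) * (\<i> * cis \<theta>)"
    using sp unfolding support_param_def by blast
  have "((\<lambda>\<theta>. \<gamma> \<theta> - c) has_vector_derivative v) (at \<theta>)"
    using has_vector_derivative_diff[OF v(1) has_vector_derivative_const[of c]] by simp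
  with v(2) show "\<exists>v. ((\<lambda>\<theta>. \<gamma> \<theta> - c) has_vector_derivative v) (at \<theta>) \<and>
      v = complex_of_real (cmod v) * (\<i> * cis \<theta>)" by blast
qed

lemma support_param_reflect:
  assumes sp: "support_param Ov \<gamma>"
  shows "support_param ((\<lambda>z. 2 * c - z) ` Ov) (\<lambda>\<theta>. 2 * c - \<gamma> (\<theta> + pi))"
  unfolding support_param_def
proof (intro conjI allI)
  show "2 * c - \<gamma> (\<theta> + 2 * pi + pi) = 2 * c - \<gamma> (\<theta> + pi)" for \<theta>
    using support_paramD(1)[OF sp, rule_format, of "\<theta> + pi"] by (simp add: algebra_simps)
  show "inj_on (\<lambda>\<theta>. 2 * c - \<gamma> (\<theta> + pi)) {0..<2 * pi}"
  proof (rule inj_onI)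
    fix x y assume "x \<in> {0..<2 * pi}" "y \<in> {0..<2 * pi}" "2 * c - \<gamma> (x + pi) = 2 * c - \<gamma> (y + pi)"
    then have "x + pi = y + pi"
      by (intro inj_onD[OF support_paramD(2)[OF sp, of pi]]) auto
    then show "x = y" by simp
  qed
  have "range (\<lambda>\<theta>. 2 * c - \<gamma> (\<theta> + pi)) = (\<lambda>z. 2 * c - z) ` range (\<lambda>\<theta>. \<gamma> (\<theta> + pi))"
    by (simp add: image_image)
  then show "range (\<lambda>\<theta>. 2 * c - \<gamma> (\<theta> + pi)) = (\<lambda>z. 2 * c - z) ` Ov"
    unfolding range_shift_eq support_paramD(3)[OF sp] .
  obtain d where d: "\<And>\<theta>. d \<theta> \<ge> 0"
    "\<And>\<theta>. (\<gamma> has_vector_derivative complex_of_real (d \<theta>) * (\<i> * cis \<theta>)) (at \<theta>)"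
    using support_param_derivative[OF sp] by blast
  fix \<theta>
  have "((\<lambda>x. x + pi) has_vector_derivative 1) (at \<theta>)"
    by (auto intro!: derivative_eq_intros)
  from vector_diff_chain_at[OF this d(2)]
  have "((\<lambda>\<theta>. \<gamma> (\<theta> + pi)) has_vector_derivative
      complex_of_real (d (\<theta> + pi)) * (\<i> * cis (\<theta> + pi))) (at \<theta>)"
    by (simp add: o_def)
  then have "((\<lambda>\<theta>. 2 * c - \<gamma> (\<theta> + pi)) has_vector_derivative
      0 - complex_of_real (d (\<theta> + pi)) * (\<i> * cis (\<theta> + pi))) (at \<theta>)"
    by (intro has_vector_derivative_diff has_vector_derivative_const)
  moreover have "0 - complex_of_real (d (\<theta> + pi)) * (\<i> * cis (\<theta> + pi))
      = complex_of_real (d (\<theta> + pi)) * (\<i> * cis \<theta>)"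
    by (simp flip: minus_cis)
  ultimately have "((\<lambda>\<theta>. 2 * c - \<gamma> (\<theta> + pi)) has_vector_derivative
      complex_of_real (d (\<theta> + pi)) * (\<i> * cis \<theta>)) (at \<theta>)"
    by (simp only:)
  moreover have "cmod (complex_of_real (d (\<theta> + pi)) * (\<i> * cis \<theta>)) = d (\<theta> + pi)"
    using d(1) by (simp add: norm_mult)
  ultimately show "\<exists>v. ((\<lambda>\<theta>. 2 * c - \<gamma> (\<theta> + pi)) has_vector_derivative v) (at \<theta>) \<and>
      v = complex_of_real (cmod v) * (\<i> * cis \<theta>)"
    by auto
qed

lemma support_param_symmetric:
  assumes sp: "support_param Ov \<gamma>" and antipodal: "\<forall>\<theta>. \<gamma> (\<theta> + pi) = 2 * c - \<gamma> \<theta>"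
  shows "(\<lambda>z. 2 * c - z) ` Ov = Ov"
proof -
  have "(\<lambda>\<theta>. 2 * c - \<gamma> \<theta>) = (\<lambda>\<theta>. \<gamma> (\<theta> + pi))" using antipodal by (intro ext) simp
  then have "(\<lambda>z. 2 * c - z) ` range \<gamma> = range (\<lambda>\<theta>. \<gamma> (\<theta> + pi))"
    unfolding image_image by (rule arg_cong)
  then show ?thesis
    unfolding range_shift_eq support_paramD(3)[OF sp] .
qed

lemma centrix_eq_center:
  assumes "oval Ov" and sp: "support_param Ov \<gamma>" and symmetric: "(\<lambda>z. 2 * c - z) ` Ov = Ov"
  shows "centrix Ov \<theta> = c"
proof -
  have "support_param Ov (\<lambda>\<theta>. 2 * c - \<gamma> (\<theta> + pi))"
    using support_param_reflect[OF sp, of c] symmetric by simp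
  then have "centrix Ov \<theta> = (2 * c - \<gamma> (\<theta> + pi) + (2 * c - \<gamma> (\<theta> + pi + pi))) / 2"
    by (rule centrix_support_param[OF \<open>oval Ov\<close>])
  also have "\<gamma> (\<theta> + pi + pi) = \<gamma> \<theta>"
    using support_paramD(1)[OF sp] by (simp add: add.assoc flip: mult_2)
  also have "(2 * c - \<gamma> (\<theta> + pi) + (2 * c - \<gamma> \<theta>)) / 2 = 2 * c - centrix Ov \<theta>"
    unfolding centrix_support_param[OF \<open>oval Ov\<close> sp] by (simp add: field_simps)
  finally show ?thesis by (simp add: field_simps)
qed

theorem mainTheorem13:
  fixes Ov :: "complex set" and \<gamma> :: "real \<Rightarrow> complex"
  assumes "oval Ov" and "support_param Ov \<gamma>"
  shows "(\<forall>\<theta>. centrix Ov \<theta> = (\<gamma> \<theta> + \<gamma> (\<theta> + pi)) / 2)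
         \<and> ((\<exists>c. \<forall>\<theta>. centrix Ov \<theta> = c) \<longleftrightarrow> central Ov)
         \<and> (\<forall>c. (\<forall>\<theta>. centrix Ov \<theta> = c) \<longrightarrow>
               support_param ((\<lambda>z. z - c) ` Ov) (\<lambda>\<theta>. (\<gamma> \<theta> - \<gamma> (\<theta> + pi)) / 2))"
proof -
  note centrix = centrix_support_param[OF assms]
  have constant_iff: "(\<forall>\<theta>. centrix Ov \<theta> = c) \<longleftrightarrow> (\<forall>\<theta>. \<gamma> (\<theta> + pi) = 2 * c - \<gamma> \<theta>)" for c
    unfolding centrix by (auto simp: field_simps)
  show ?thesis
  proof (intro conjI allI impI iffI)
    show "centrix Ov \<theta> = (\<gamma> \<theta> + \<gamma> (\<theta> + pi)) / 2" for \<theta>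
      by (rule centrix)
    show "central Ov" if "\<exists>c. \<forall>\<theta>. centrix Ov \<theta> = c"
      using that support_param_symmetric[OF assms(2)] unfolding constant_iff central_def by blast
    show "\<exists>c. \<forall>\<theta>. centrix Ov \<theta> = c" if "central Ov"
      using that centrix_eq_center[OF assms] unfolding central_def by blast
    fix c assume "\<forall>\<theta>. centrix Ov \<theta> = c"
    then have "\<forall>\<theta>. \<gamma> (\<theta> + pi) = 2 * c - \<gamma> \<theta>" by (rule constant_iff[THEN iffD1])
    then have "(\<lambda>\<theta>. (\<gamma> \<theta> - \<gamma> (\<theta> + pi)) / 2) = (\<lambda>\<theta>. \<gamma> \<theta> - c)"
      by (intro ext) (simp add: field_simps)
    then show "support_param ((\<lambda>z. z - c) ` Ov) (\<lambda>\<theta>. (\<gamma> \<theta> - \<gamma> (\<theta> + pi)) / 2)"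
      using support_param_translate[OF assms(2)] by simp
  qed
qed

end
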